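(* Let $X$ be an unbounded metric space of bounded geometry with finite asymptotic dimension, and let $1\le p<\infty$. Then for every $S>0$ with $\delta_p(S)>0$, $$\epsilon_{X;p}(S)\le\frac{2^{1+1/p}}{\delta_p(S)}\le\frac{4}{\delta_p(S)}.$$
   Context: A metric space has bounded geometry if for every $R$ there is $C$ such that every $R$-ball has at most $C$ points. For a cover $\mathfrak U$ of $X$: $L(\mathfrak U,x)=\sup_{U\in\mathfrak U}\sup\{r: B_r(x)\subset U\}$, $L(\mathfrak U)=\inf_x L(\mathfrak U,x)$, $m(\mathfrak U)=\max_x\#\{U\in\mathfrak U:x\in U\}$, $S(\mathfrak U)=\sup_{U\in\mathfrak U}\operatorname{diam}U$. $X$ has finite asymptotic dimension if for some $k$ and every $L>0$ there is a cover with finite mesh, multiplicity $\le k+1$ and Lebesgue number $\ge L$. Define $\delta_p(S)=\sup\{L(\mathfrak U)/m(\mathfrak U)^{2/p}\}$ over covers $\mathfrak U$ of $X$ with $S(\mathfrak U)\le S$ (terms with infinite multiplicity count as $0$). $\ell^p(X)$, $\ell^p_1(X)$ denote the $p$-summable functions and their unit sphere; for $\xi\colon X\to\ell^p(X)$, $S(\xi)=\sup\{d(x,y):\xi_x(y)\ne0\}$, $\varepsilon(\xi;p)=\sup_{x\ne y}\|\xi_x-\xi_y\|_p/d(x,y)$, and $\epsilon_{X;p}(S)=\inf\{\varepsilon(\xi;p):\xi\colon X\to\ell^p_1(X),\ S(\xi)\le S\}$. *)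

theory Defs
  imports "HOL-Analysis.Analysis"
begin

text \<open>The metric space X is the whole type 'a. Suprema are taken in the extended reals.\<close>

definition bounded_geometry :: "'a::metric_space itself \<Rightarrow> bool" where
  "bounded_geometry _ \<longleftrightarrow>
     (\<forall>R::real. \<exists>C::nat. \<forall>x::'a. finite (cball x R) \<and> card (cball x R) \<le> C)"

definition leb_at :: "'a::metric_space set set \<Rightarrow> 'a \<Rightarrow> ereal" where
  "leb_at \<U> x = (SUP U\<in>\<U>. Sup {ereal r | r. ball x r \<subseteq> U})"

definition leb :: "'a::metric_space set set \<Rightarrow> ereal" where
  "leb \<U> = (INF x. leb_at \<U> x)"

definition mult :: "'a set set \<Rightarrow> ereal" where
  "mult \<U> = (SUP x. (if finite {U\<in>\<U>. x \<in> U} then ereal (real (card {U\<in>\<U>. x \<in> U})) else \<infinity>))"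

definition ediam :: "'a::metric_space set \<Rightarrow> ereal" where
  "ediam U = (SUP (x,y)\<in>U \<times> U. ereal (dist x y))"

definition mesh :: "'a::metric_space set set \<Rightarrow> ereal" where
  "mesh \<U> = (SUP U\<in>\<U>. ediam U)"

definition is_cover :: "'a set set \<Rightarrow> bool" where
  "is_cover \<U> \<longleftrightarrow> \<Union>\<U> = UNIV"

definition finite_asdim :: "'a::metric_space itself \<Rightarrow> bool" where
  "finite_asdim _ \<longleftrightarrow> (\<exists>k::nat. \<forall>L::real. L > 0 \<longrightarrow>
     (\<exists>\<U>::'a set set. is_cover \<U> \<and> mesh \<U> < \<infinity> \<and> mult \<U> \<le> ereal (real k + 1)
        \<and> leb \<U> \<ge> ereal L))"

text \<open>Term L(U)/m(U)^(2/p); covers of infinite multiplicity contribute 0.\<close>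
definition cover_ratio :: "real \<Rightarrow> 'a::metric_space set set \<Rightarrow> ereal" where
  "cover_ratio p \<U> =
     (if mult \<U> = \<infinity> then 0 else leb \<U> / ereal (real_of_ereal (mult \<U>) powr (2 / p)))"

definition delta_p :: "'a::metric_space itself \<Rightarrow> real \<Rightarrow> real \<Rightarrow> ereal" where
  "delta_p _ p S = (SUP \<U>\<in>{\<U>::'a set set. is_cover \<U> \<and> mesh \<U> \<le> ereal S}. cover_ratio p \<U>)"

definition in_lp :: "real \<Rightarrow> ('a \<Rightarrow> real) \<Rightarrow> bool" where
  "in_lp p f \<longleftrightarrow> (\<lambda>y. \<bar>f y\<bar> powr p) summable_on UNIV"

definition lp_norm :: "real \<Rightarrow> ('a \<Rightarrow> real) \<Rightarrow> real" where
  "lp_norm p f = (\<Sum>\<^sub>\<infinity>y. \<bar>f y\<bar> powr p) powr (1 / p)"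

definition lp_sphere :: "real \<Rightarrow> ('a \<Rightarrow> real) set" where
  "lp_sphere p = {f. in_lp p f \<and> lp_norm p f = 1}"

definition prop_S :: "('a::metric_space \<Rightarrow> 'a \<Rightarrow> real) \<Rightarrow> ereal" where
  "prop_S \<xi> = Sup {ereal (dist x y) | x y. \<xi> x y \<noteq> 0}"

definition eps_xi :: "real \<Rightarrow> ('a::metric_space \<Rightarrow> 'a \<Rightarrow> real) \<Rightarrow> ereal" where
  "eps_xi p \<xi> = (SUP (x,y)\<in>{(x,y). x \<noteq> y}. ereal (lp_norm p (\<lambda>z. \<xi> x z - \<xi> y z) / dist x y))"

definition eps_X :: "'a::metric_space itself \<Rightarrow> real \<Rightarrow> real \<Rightarrow> ereal" where
  "eps_X _ p S = (INF \<xi>\<in>{\<xi>::'a \<Rightarrow> 'a \<Rightarrow> real. (\<forall>x. \<xi> x \<in> lp_sphere p) \<and> prop_S \<xi> \<le> ereal S}. eps_xi p \<xi>)"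

end

theory Submission
  imports Defs
begin

(* Take a cover \<U> of mesh at most S with multiplicity m and Lebesgue number L > 0, and put
     F_x(z) = (\<Sum>_{U \<ni> z} d(x, X - U)^p / |U|)^(1/p).
   Summing over z spreads each d(x, X - U)^p evenly over the points of U, so
   ||F_x||_p^p = \<Sum>_{U \<ni> x} d(x, X - U)^p \<ge> L^p; here unboundedness of X keeps every X - U
   nonempty.  Since d(-, X - U) is 1-Lipschitz and at most 2m sets contain x or y,
   ||F_x - F_y||_p \<le> (2m)^(1/p) d(x, y).  The normalised \<xi>_x = F_x / ||F_x||_p is supported in the
   S-ball around x and satisfies ||\<xi>_x - \<xi>_y||_p \<le> 2 (2m)^(1/p) d(x, y) / L
   \<le> 2^(1 + 1/p) d(x, y) / (L / m^(2/p)); taking the supremum over covers gives the bound. *)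

lemma convex_on_powr_nonneg:
  assumes "1 \<le> p"
  shows "convex_on {0::real..} (\<lambda>x. x powr p)"
proof (rule convex_on_linorderI)
  fix t x y :: real
  assume t: "0 < t" "t < 1" and xy: "x \<in> {0..}" "y \<in> {0..}" "x < y"
  show "((1 - t) *\<^sub>R x + t *\<^sub>R y) powr p \<le> (1 - t) * x powr p + t * y powr p"
  proof (cases "x = 0")
    case True
    have "t powr p \<le> t powr 1"
      using t assms by (intro powr_mono') auto
    then show ?thesis
      using True xy t by (simp add: powr_mult mult_right_mono)
  next
    case False
    then show ?thesis
      using convex_onD[OF powr_convex[OF assms], of t x y] t xy by simp
  qed
qed simp

definition lp_set :: "real \<Rightarrow> ('i \<Rightarrow> real) \<Rightarrow> 'i set \<Rightarrow> real" where
  "lp_set p f I = (\<Sum>i\<in>I. \<bar>f i\<bar> powr p) powr (1 / p)"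

lemma lp_set_nonneg [simp]: "0 \<le> lp_set p f I"
  by (simp add: lp_set_def)

lemma lp_set_powr:
  assumes "0 < p"
  shows "lp_set p f I powr p = (\<Sum>i\<in>I. \<bar>f i\<bar> powr p)"
  using assms by (simp add: lp_set_def powr_powr sum_nonneg)

lemma lp_set_cong: "(\<And>i. i \<in> I \<Longrightarrow> f i = g i) \<Longrightarrow> lp_set p f I = lp_set p g I"
  unfolding lp_set_def by (metis (no_types, lifting) sum.cong)

lemma lp_set_eq_0_iff:
  assumes "finite I" "0 < p"
  shows "lp_set p f I = 0 \<longleftrightarrow> (\<forall>i\<in>I. f i = 0)"
  using assms by (simp add: lp_set_def sum_nonneg_eq_0_iff)

lemma lp_set_cmult:
  assumes "0 < p"
  shows "lp_set p (\<lambda>i. c * f i) I = \<bar>c\<bar> * lp_set p f I"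
  using assms
  by (simp add: lp_set_def abs_mult powr_mult sum_distrib_left[symmetric] sum_nonneg powr_powr)

lemma lp_set_member_le:
  assumes "finite I" "i \<in> I" "0 < p"
  shows "\<bar>f i\<bar> \<le> lp_set p f I"
proof -
  have "\<bar>f i\<bar> powr p \<le> (\<Sum>i\<in>I. \<bar>f i\<bar> powr p)"
    using assms by (intro member_le_sum) auto
  then have "(\<bar>f i\<bar> powr p) powr (1 / p) \<le> lp_set p f I"
    unfolding lp_set_def using assms by (intro powr_mono2) auto
  then show ?thesis
    using assms by (simp add: powr_powr)
qed

lemma lp_set_le_if_powr_le:
  assumes "0 < p" "0 \<le> c" "(\<Sum>i\<in>I. \<bar>f i\<bar> powr p) \<le> c powr p"
  shows "lp_set p f I \<le> c"
proof -
  have "lp_set p f I \<le> (c powr p) powr (1 / p)"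
    unfolding lp_set_def using assms by (intro powr_mono2) (auto intro: sum_nonneg)
  also have "\<dots> = c"
    using assms by (simp add: powr_powr)
  finally show ?thesis .
qed

lemma lp_set_normalized_powr_sum:
  assumes "0 < p" "0 < lp_set p f I"
  shows "(\<Sum>i\<in>I. (\<bar>f i\<bar> / lp_set p f I) powr p) = 1"
  using assms by (simp add: powr_divide sum_divide_distrib[symmetric] lp_set_powr[symmetric])

lemma abs_add_powr_le:
  fixes a b A B p :: real
  assumes "1 \<le> p" "0 < A" "0 < B"
  shows "\<bar>a + b\<bar> powr p
    \<le> (A + B) powr p * (A / (A + B) * (\<bar>a\<bar> / A) powr p + B / (A + B) * (\<bar>b\<bar> / B) powr p)"
proof -
  define t where "t = B / (A + B)"
  have t: "0 \<le> t" "t \<le> 1" "1 - t = A / (A + B)"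
    using assms by (auto simp: t_def field_simps)
  \<comment> \<open>\<open>|a| + |b|\<close> is \<open>A + B\<close> times a convex combination of \<open>|a| / A\<close> and \<open>|b| / B\<close>\<close>
  have "(1 - t) * (\<bar>a\<bar> / A) = \<bar>a\<bar> / (A + B)" "t * (\<bar>b\<bar> / B) = \<bar>b\<bar> / (A + B)"
    using assms by (simp_all add: t(3)) (simp add: t_def)
  then have comb: "\<bar>a\<bar> + \<bar>b\<bar> = (A + B) * ((1 - t) * (\<bar>a\<bar> / A) + t * (\<bar>b\<bar> / B))"
    using assms by (simp add: add_divide_distrib[symmetric])
  have "\<bar>a + b\<bar> powr p \<le> (\<bar>a\<bar> + \<bar>b\<bar>) powr p"
    using assms by (intro powr_mono2) auto
  also have "\<dots> = (A + B) powr p * ((1 - t) * (\<bar>a\<bar> / A) + t * (\<bar>b\<bar> / B)) powr p"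
    unfolding comb using assms t by (subst powr_mult) auto
  also have "\<dots> \<le> (A + B) powr p * ((1 - t) * (\<bar>a\<bar> / A) powr p + t * (\<bar>b\<bar> / B) powr p)"
    using convex_onD[OF convex_on_powr_nonneg[OF assms(1)], of t "\<bar>a\<bar> / A" "\<bar>b\<bar> / B"] assms t
    by (intro mult_left_mono) auto
  finally show ?thesis
    unfolding t(3)[symmetric] t_def[symmetric] .
qed

lemma lp_set_triangle_ineq:
  assumes "1 \<le> p"
  shows "lp_set p (\<lambda>i. f i + g i) I \<le> lp_set p f I + lp_set p g I"
proof (cases "finite I")
  case False
  then show ?thesis by (simp add: lp_set_def)
next
  case fin: True
  define A B where "A = lp_set p f I" and "B = lp_set p g I"
  have p: "0 < p" using assms by simp
  consider "A = 0" | "B = 0" | "0 < A" "0 < B"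
    unfolding A_def B_def by (metis lp_set_nonneg order_le_less)
  then show ?thesis
  proof cases
    case 1
    then have "lp_set p (\<lambda>i. f i + g i) I = lp_set p g I"
      using lp_set_eq_0_iff[OF fin p] unfolding A_def B_def by (auto intro: lp_set_cong)
    then show ?thesis by (simp add: 1[unfolded A_def])
  next
    case 2
    then have "lp_set p (\<lambda>i. f i + g i) I = lp_set p f I"
      using lp_set_eq_0_iff[OF fin p] unfolding A_def B_def by (auto intro: lp_set_cong)
    then show ?thesis by (simp add: 2[unfolded B_def])
  next
    case 3
    have "(\<Sum>i\<in>I. \<bar>f i + g i\<bar> powr p) \<le> (\<Sum>i\<in>I. (A + B) powr p
        * (A / (A + B) * (\<bar>f i\<bar> / A) powr p + B / (A + B) * (\<bar>g i\<bar> / B) powr p))"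
      using 3 by (intro sum_mono abs_add_powr_le[OF assms])
    also have "\<dots> = (A + B) powr p * (A / (A + B) * (\<Sum>i\<in>I. (\<bar>f i\<bar> / A) powr p)
        + B / (A + B) * (\<Sum>i\<in>I. (\<bar>g i\<bar> / B) powr p))"
      by (simp only: sum_distrib_left[symmetric] sum.distrib)
    also have "\<dots> = (A + B) powr p"
      using 3 p unfolding A_def B_def by (simp add: lp_set_normalized_powr_sum add_divide_distrib[symmetric])
    finally show ?thesis
      unfolding A_def B_def using 3 p by (intro lp_set_le_if_powr_le) (auto simp: A_def B_def)
  qed
qed

lemma lp_set_minus_commute: "lp_set p (\<lambda>i. f i - g i) I = lp_set p (\<lambda>i. g i - f i) I"
  unfolding lp_set_def by (simp add: abs_minus_commute)

lemma lp_set_diff_triangle_ineq: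
  assumes "1 \<le> p"
  shows "lp_set p (\<lambda>i. f i - h i) I \<le> lp_set p (\<lambda>i. f i - g i) I + lp_set p (\<lambda>i. g i - h i) I"
  using lp_set_triangle_ineq[OF assms, of "\<lambda>i. f i - g i" "\<lambda>i. g i - h i"] by simp

lemma lp_set_reverse_triangle_ineq:
  assumes "1 \<le> p"
  shows "\<bar>lp_set p f I - lp_set p g I\<bar> \<le> lp_set p (\<lambda>i. f i - g i) I"
  using lp_set_diff_triangle_ineq[OF assms, of f "\<lambda>_. 0" I g]
    lp_set_diff_triangle_ineq[OF assms, of g "\<lambda>_. 0" I f] lp_set_minus_commute[of p f g I]
  by simp

lemma lp_set_normalized_diff_le:
  assumes "1 \<le> p" "0 < lp_set p f I"
  shows "lp_set p (\<lambda>i. f i / lp_set p f I - g i / lp_set p g I) I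
    \<le> 2 * lp_set p (\<lambda>i. f i - g i) I / lp_set p f I"
proof -
  define A B D where "A = lp_set p f I" and "B = lp_set p g I" and "D = lp_set p (\<lambda>i. f i - g i) I"
  have p: "0 < p" and A: "0 < A" and B: "0 \<le> B"
    using assms by (auto simp: A_def B_def)
  have "lp_set p (\<lambda>i. f i / A - g i / B) I
      \<le> lp_set p (\<lambda>i. f i / A - g i / A) I + lp_set p (\<lambda>i. g i / A - g i / B) I"
    by (rule lp_set_diff_triangle_ineq[OF assms(1)])
  also have "lp_set p (\<lambda>i. f i / A - g i / A) I = D / A"
    using lp_set_cmult[OF p, of "1 / A" "\<lambda>i. f i - g i" I] A
    by (simp add: D_def diff_divide_distrib)
  also have "lp_set p (\<lambda>i. g i / A - g i / B) I = \<bar>1 / A - 1 / B\<bar> * B"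
    using lp_set_cmult[OF p, of "1 / A - 1 / B" g I] by (simp add: B_def algebra_simps)
  also have "\<bar>1 / A - 1 / B\<bar> * B \<le> D / A"
  proof (cases "B = 0")
    case False
    then have "1 / A - 1 / B = (B - A) / (A * B)"
      using A by (simp add: field_simps)
    then have "\<bar>1 / A - 1 / B\<bar> * B = \<bar>A - B\<bar> / A"
      using A B False by (simp add: abs_minus_commute)
    also have "\<dots> \<le> D / A"
      using lp_set_reverse_triangle_ineq[OF assms(1), of f I g] A
      by (simp add: A_def B_def D_def divide_right_mono)
    finally show ?thesis .
  qed (use A in \<open>simp add: D_def\<close>)
  finally show ?thesis
    by (simp add: A_def B_def D_def)
qed

lemma
  assumes "finite Z" "\<And>z. z \<notin> Z \<Longrightarrow> f z = 0"
  shows in_lp_finite_support: "in_lp p f"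
    and lp_norm_finite_support: "lp_norm p f = lp_set p f Z"
proof -
  have "(\<lambda>y. \<bar>f y\<bar> powr p) summable_on Z"
    using assms(1) by simp
  then show "in_lp p f"
    unfolding in_lp_def using assms by (subst summable_on_cong_neutral[of Z]) auto
  have "(\<Sum>\<^sub>\<infinity>y. \<bar>f y\<bar> powr p) = (\<Sum>\<^sub>\<infinity>y\<in>Z. \<bar>f y\<bar> powr p)"
    using assms by (intro infsum_cong_neutral) auto
  then show "lp_norm p f = lp_set p f Z"
    using assms(1) by (simp add: lp_norm_def lp_set_def)
qed

lemma sum_spread_over_members:
  assumes "finite Z" "finite W" "W \<subseteq> \<U>" "\<And>U. U \<in> W \<Longrightarrow> U \<noteq> {} \<and> U \<subseteq> Z"
    and "\<And>z. z \<in> Z \<Longrightarrow> finite {U\<in>\<U>. z \<in> U}" "\<And>U. U \<in> \<U> \<Longrightarrow> U \<notin> W \<Longrightarrow> h U = 0"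
  shows "(\<Sum>z\<in>Z. \<Sum>U\<in>{U\<in>\<U>. z \<in> U}. h U / real (card U)) = (\<Sum>U\<in>W. h U)"
proof -
  have "(\<Sum>z\<in>Z. \<Sum>U\<in>{U\<in>\<U>. z \<in> U}. h U / real (card U))
      = (\<Sum>z\<in>Z. \<Sum>U\<in>{U\<in>W. z \<in> U}. h U / real (card U))"
    using assms by (intro sum.cong refl sum.mono_neutral_right) auto
  also have "\<dots> = (\<Sum>U\<in>W. \<Sum>z\<in>{z\<in>Z. z \<in> U}. h U / real (card U))"
    by (rule sum.swap_restrict[OF assms(1,2)])
  also have "\<dots> = (\<Sum>U\<in>W. h U)"
  proof (rule sum.cong[OF refl])
    fix U assume U: "U \<in> W"
    then have "{z\<in>Z. z \<in> U} = U" "card U > 0"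
      using assms(1,4) by (auto simp: card_gt_0_iff intro: finite_subset)
    then show "(\<Sum>z\<in>{z\<in>Z. z \<in> U}. h U / real (card U)) = h U"
      by simp
  qed
  finally show ?thesis .
qed

lemma powr_abs_divide_root:
  fixes t n p :: real
  assumes "0 < n" "0 < p"
  shows "\<bar>t / n powr (1 / p)\<bar> powr p = \<bar>t\<bar> powr p / n"
  using assms by (simp add: powr_divide powr_powr)

lemma le_infdist_compl_if_ball_subset:
  assumes "ball x r \<subseteq> U" "U \<noteq> UNIV"
  shows "r \<le> infdist x (- U)"
proof -
  have "- U \<noteq> {}"
    using assms(2) by auto
  then show ?thesis
    unfolding infdist_notempty[OF \<open>- U \<noteq> {}\<close>] using assms(1)
    by (intro cINF_greatest) (auto simp: subset_iff not_less)
qed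

locale cover_embedding =
  fixes \<U> :: "'a::metric_space set set" and p S :: real
  assumes unbounded: "\<not> bounded (UNIV :: 'a set)"
    and finite_cball: "\<And>x::'a. finite (cball x S)"
    and cover: "is_cover \<U>"
    and mesh_le: "mesh \<U> \<le> ereal S"
    and mult_finite: "mult \<U> \<noteq> \<infinity>"
    and leb_pos: "0 < leb \<U>"
    and p_ge_1: "1 \<le> p"
begin

lemma p_pos: "0 < p"
  using p_ge_1 by simp

lemma dist_le_if_member:
  assumes "U \<in> \<U>" "x \<in> U" "y \<in> U"
  shows "dist x y \<le> S"
proof -
  have "ereal (dist x y) \<le> ediam U"
    unfolding ediam_def using assms by (intro SUP_upper2[of "(x, y)"]) auto
  also have "\<dots> \<le> mesh \<U>"
    unfolding mesh_def using assms by (intro SUP_upper)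
  finally have "ereal (dist x y) \<le> ereal S"
    using mesh_le by (rule order_trans)
  then show ?thesis
    by simp
qed

lemma member_subset_cball: "U \<in> \<U> \<Longrightarrow> x \<in> U \<Longrightarrow> U \<subseteq> cball x S"
  using dist_le_if_member by auto

lemma member_neq_UNIV:
  assumes "U \<in> \<U>"
  shows "U \<noteq> UNIV"
proof
  assume "U = UNIV"
  then have "bounded (UNIV :: 'a set)"
    using bounded_subset[OF bounded_cball member_subset_cball[OF assms]] by simp
  with unbounded show False ..
qed

lemma finite_member: "U \<in> \<U> \<Longrightarrow> x \<in> U \<Longrightarrow> finite U"
  using finite_subset[OF member_subset_cball finite_cball] .

lemma card_member_pos: "U \<in> \<U> \<Longrightarrow> x \<in> U \<Longrightarrow> 0 < card U"
  using finite_member by (auto simp: card_gt_0_iff)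

definition members :: "'a \<Rightarrow> 'a set set" where
  "members z = {U\<in>\<U>. z \<in> U}"

lemma members_count_le_mult:
  "(if finite (members x) then ereal (real (card (members x))) else \<infinity>) \<le> mult \<U>"
  unfolding mult_def members_def by (rule SUP_upper) simp

lemma finite_members: "finite (members x)"
  using members_count_le_mult[of x] mult_finite by (auto split: if_splits)

lemma members_nonempty: "members x \<noteq> {}"
  using cover by (auto simp: is_cover_def members_def)

definition multiplicity :: real where
  "multiplicity = real_of_ereal (mult \<U>)"

lemma card_members_ge_1: "1 \<le> card (members x)"
  using finite_members members_nonempty by (simp add: Suc_le_eq card_gt_0_iff)

lemma mult_eq: "mult \<U> = ereal multiplicity"
  using members_count_le_mult[of undefined] card_members_ge_1[of undefined] finite_members mult_finite
  unfolding multiplicity_def by (cases "mult \<U>") auto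

lemma card_members_le: "real (card (members x)) \<le> multiplicity"
  using members_count_le_mult[of x] finite_members by (simp add: mult_eq)

lemma multiplicity_ge_1: "1 \<le> multiplicity"
  using card_members_le[of undefined] card_members_ge_1[of undefined] by linarith

definition weight :: "'a set \<Rightarrow> 'a \<Rightarrow> real" where
  "weight U x = infdist x (- U) / real (card U) powr (1 / p)"

definition bump :: "'a \<Rightarrow> 'a \<Rightarrow> real" where
  "bump x z = lp_set p (\<lambda>U. weight U x) (members z)"

definition bump_norm :: "'a \<Rightarrow> real" where
  "bump_norm x = lp_set p (bump x) (cball x S)"

definition embedding :: "'a \<Rightarrow> 'a \<Rightarrow> real" where
  "embedding x z = bump x z / bump_norm x"

lemma card_pos_if_members:
  "U \<in> members z \<Longrightarrow> 0 < real (card U)"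
  unfolding members_def using card_member_pos by auto

lemma weight_diff_powr:
  assumes "U \<in> members z"
  shows "\<bar>weight U x - weight U y\<bar> powr p = \<bar>infdist x (- U) - infdist y (- U)\<bar> powr p / card U"
  unfolding weight_def diff_divide_distrib[symmetric]
  by (rule powr_abs_divide_root[OF card_pos_if_members[OF assms] p_pos])

lemma weight_powr:
  assumes "U \<in> members z"
  shows "\<bar>weight U x\<bar> powr p = infdist x (- U) powr p / card U"
  using powr_abs_divide_root[OF card_pos_if_members[OF assms] p_pos, of "infdist x (- U)"]
  by (simp add: weight_def infdist_nonneg)

lemma bump_nonneg: "0 \<le> bump x z"
  by (simp add: bump_def)

lemma bump_nonzero_imp_dist_le:
  assumes "bump x z \<noteq> 0"
  shows "z \<in> cball x S"
proof -
  obtain U where U: "U \<in> members z" "weight U x \<noteq> 0"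
    using assms lp_set_eq_0_iff[OF finite_members p_pos] unfolding bump_def by blast
  have "x \<in> U"
  proof (rule ccontr)
    assume "x \<notin> U"
    then have "weight U x = 0"
      by (simp add: weight_def)
    with U show False
      by simp
  qed
  then show ?thesis
    using U dist_le_if_member[of U x z] by (simp add: members_def)
qed

lemma bump_powr: "bump x z powr p = (\<Sum>U\<in>members z. infdist x (- U) powr p / card U)"
  unfolding bump_def lp_set_powr[OF p_pos] by (intro sum.cong refl weight_powr)

lemma bump_norm_eq: "bump_norm x = lp_set p (\<lambda>U. infdist x (- U)) (members x)"
proof -
  have "(\<Sum>z\<in>cball x S. \<bar>bump x z\<bar> powr p)
      = (\<Sum>z\<in>cball x S. \<Sum>U\<in>members z. infdist x (- U) powr p / card U)"
    by (simp add: abs_of_nonneg[OF bump_nonneg] bump_powr)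
  also have "\<dots> = (\<Sum>U\<in>members x. infdist x (- U) powr p)"
    unfolding members_def
    by (rule sum_spread_over_members)
      (use finite_cball finite_members member_subset_cball in \<open>auto simp: members_def\<close>)
  finally show ?thesis
    by (simp add: bump_norm_def lp_set_def infdist_nonneg)
qed

lemma leb_le_bump_norm: "leb \<U> \<le> ereal (bump_norm x)"
proof -
  have "Sup {ereal r | r. ball x r \<subseteq> U} \<le> ereal (bump_norm x)" if "U \<in> \<U>" for U
  proof (rule Sup_least, clarify)
    fix r assume r: "ball x r \<subseteq> U"
    show "ereal r \<le> ereal (bump_norm x)"
    proof (cases "x \<in> U")
      case True
      have "r \<le> infdist x (- U)"
        using r member_neq_UNIV[OF that] by (rule le_infdist_compl_if_ball_subset)
      also have "\<dots> \<le> bump_norm x"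
        unfolding bump_norm_eq using True that infdist_nonneg
        by (intro order_trans[OF _ lp_set_member_le[OF finite_members _ p_pos]])
          (auto simp: members_def)
      finally show ?thesis by simp
    next
      case False
      then have "r \<le> 0"
        using r by (metis centre_in_ball not_le subsetD)
      then show ?thesis
        by (simp add: bump_norm_def order_trans[OF _ lp_set_nonneg])
    qed
  qed
  then have "leb_at \<U> x \<le> ereal (bump_norm x)"
    unfolding leb_at_def by (intro SUP_least)
  then show ?thesis
    unfolding leb_def by (intro order_trans[OF INF_lower[OF UNIV_I]])
qed

definition lebesgue :: real where
  "lebesgue = real_of_ereal (leb \<U>)"

lemma leb_eq: "leb \<U> = ereal lebesgue"
  using leb_le_bump_norm[of undefined] leb_pos unfolding lebesgue_def by (cases "leb \<U>") auto

lemma lebesgue_pos: "0 < lebesgue"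
  using leb_pos by (simp add: leb_eq)

lemma lebesgue_le_bump_norm: "lebesgue \<le> bump_norm x"
  using leb_le_bump_norm[of x] by (simp add: leb_eq)

lemma bump_norm_pos: "0 < bump_norm x"
  using lebesgue_pos lebesgue_le_bump_norm[of x] by linarith

lemma embedding_in_lp_sphere: "embedding x \<in> lp_sphere p"
proof -
  have supp: "embedding x z = 0" if "z \<notin> cball x S" for z
    using bump_nonzero_imp_dist_le that by (fastforce simp: embedding_def)
  have "lp_norm p (embedding x) = lp_set p (embedding x) (cball x S)"
    by (rule lp_norm_finite_support[OF finite_cball supp])
  also have "\<dots> = lp_set p (\<lambda>z. (1 / bump_norm x) * bump x z) (cball x S)"
    by (intro lp_set_cong) (simp add: embedding_def)
  also have "\<dots> = \<bar>1 / bump_norm x\<bar> * bump_norm x"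
    unfolding bump_norm_def by (rule lp_set_cmult[OF p_pos])
  also have "\<dots> = 1"
    using bump_norm_pos[of x] by simp
  finally show ?thesis
    using in_lp_finite_support[of "cball x S" "embedding x"] finite_cball supp by (simp add: lp_sphere_def)
qed

lemma prop_S_embedding_le: "prop_S embedding \<le> ereal S"
  unfolding prop_S_def
proof (rule Sup_least, clarify)
  fix x y assume "embedding x y \<noteq> 0"
  then have "bump x y \<noteq> 0"
    by (simp add: embedding_def)
  then show "ereal (dist x y) \<le> ereal S"
    using bump_nonzero_imp_dist_le by simp
qed

lemma bump_diff_le:
  "lp_set p (\<lambda>z. bump x z - bump y z) (cball x S \<union> cball y S)
    \<le> (2 * multiplicity) powr (1 / p) * dist x y"
proof -
  let ?Z = "cball x S \<union> cball y S" and ?W = "members x \<union> members y"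
  let ?a = "\<lambda>U. \<bar>infdist x (- U) - infdist y (- U)\<bar> powr p"
  have "(\<Sum>z\<in>?Z. \<bar>bump x z - bump y z\<bar> powr p) \<le> (\<Sum>z\<in>?Z. \<Sum>U\<in>members z. ?a U / card U)"
  proof (rule sum_mono)
    fix z
    have "\<bar>bump x z - bump y z\<bar> \<le> lp_set p (\<lambda>U. weight U x - weight U y) (members z)"
      unfolding bump_def by (rule lp_set_reverse_triangle_ineq[OF p_ge_1])
    then have "\<bar>bump x z - bump y z\<bar> powr p \<le> lp_set p (\<lambda>U. weight U x - weight U y) (members z) powr p"
      using p_pos by (intro powr_mono2) auto
    also have "\<dots> = (\<Sum>U\<in>members z. ?a U / card U)"
      unfolding lp_set_powr[OF p_pos] by (intro sum.cong refl weight_diff_powr)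
    finally show "\<bar>bump x z - bump y z\<bar> powr p \<le> (\<Sum>U\<in>members z. ?a U / card U)" .
  qed
  also have "\<dots> = (\<Sum>U\<in>?W. ?a U)"
    unfolding members_def
    by (rule sum_spread_over_members)
      (use finite_cball finite_members dist_le_if_member in \<open>auto simp: members_def\<close>)
  also have "\<dots> \<le> (\<Sum>U\<in>?W. dist x y powr p)"
    using p_pos by (intro sum_mono powr_mono2) (auto simp: infdist_triangle_abs)
  also have "\<dots> \<le> 2 * multiplicity * dist x y powr p"
  proof -
    have "real (card ?W) \<le> 2 * multiplicity"
      using card_Un_le[of "members x" "members y"] card_members_le[of x] card_members_le[of y] by linarith
    then show ?thesis
      by (simp add: mult_right_mono)
  qed
  also have "\<dots> = ((2 * multiplicity) powr (1 / p) * dist x y) powr p"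
    using multiplicity_ge_1 p_pos by (simp add: powr_mult powr_powr)
  finally show ?thesis
    using multiplicity_ge_1 by (intro lp_set_le_if_powr_le[OF p_pos]) auto
qed

lemma embedding_diff_le:
  "lp_norm p (\<lambda>z. embedding x z - embedding y z)
    \<le> 2 * (2 * multiplicity) powr (1 / p) / lebesgue * dist x y"
proof -
  define Z where "Z = cball x S \<union> cball y S"
  have supp: "bump w z = 0" if "w \<in> {x, y}" "z \<notin> Z" for w z
    using bump_nonzero_imp_dist_le that by (auto simp: Z_def)
  have norm_eq: "bump_norm w = lp_set p (bump w) Z" if "w \<in> {x, y}" for w
  proof -
    have "bump_norm w = lp_norm p (bump w)"
      unfolding bump_norm_def using bump_nonzero_imp_dist_le
      by (intro lp_norm_finite_support[symmetric] finite_cball) blast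
    also have "\<dots> = lp_set p (bump w) Z"
      using that supp by (intro lp_norm_finite_support) (auto simp: Z_def finite_cball)
    finally show ?thesis .
  qed
  have "lp_norm p (\<lambda>z. embedding x z - embedding y z) = lp_set p (\<lambda>z. embedding x z - embedding y z) Z"
    by (rule lp_norm_finite_support) (use supp in \<open>auto simp: Z_def finite_cball embedding_def\<close>)
  also have "\<dots> = lp_set p (\<lambda>z. bump x z / lp_set p (bump x) Z - bump y z / lp_set p (bump y) Z) Z"
    by (intro lp_set_cong) (simp add: embedding_def norm_eq)
  also have "\<dots> \<le> 2 * lp_set p (\<lambda>z. bump x z - bump y z) Z / lp_set p (bump x) Z"
    using bump_norm_pos[of x] norm_eq[of x] by (intro lp_set_normalized_diff_le[OF p_ge_1]) auto
  also have "\<dots> \<le> 2 * ((2 * multiplicity) powr (1 / p) * dist x y) / lebesgue"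
    using bump_diff_le[of x y] lebesgue_pos lebesgue_le_bump_norm[of x] norm_eq[of x]
    by (intro frac_le) (auto simp: Z_def)
  finally show ?thesis
    by simp
qed

lemma eps_X_le: "eps_X TYPE('a) p S \<le> ereal (2 * (2 * multiplicity) powr (1 / p) / lebesgue)"
proof -
  have "eps_X TYPE('a) p S \<le> eps_xi p embedding"
    unfolding eps_X_def using embedding_in_lp_sphere prop_S_embedding_le by (intro INF_lower) auto
  also have "\<dots> \<le> ereal (2 * (2 * multiplicity) powr (1 / p) / lebesgue)"
    unfolding eps_xi_def
  proof (rule SUP_least, clarify)
    fix x y :: 'a
    assume "x \<noteq> y"
    then show "ereal (lp_norm p (\<lambda>z. embedding x z - embedding y z) / dist x y)
        \<le> ereal (2 * (2 * multiplicity) powr (1 / p) / lebesgue)"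
      using embedding_diff_le[of x y] by (simp add: pos_divide_le_eq)
  qed
  finally show ?thesis .
qed

lemma cover_ratio_eq: "cover_ratio p \<U> = ereal (lebesgue / multiplicity powr (2 / p))"
  using multiplicity_ge_1 by (simp add: cover_ratio_def mult_eq leb_eq)

end

lemma ereal_divide_nonpos_nonneg: "(a::ereal) \<le> 0 \<Longrightarrow> 0 \<le> q \<Longrightarrow> a / ereal q \<le> 0"
  by (cases a) (auto simp: divide_ereal_def ereal_mult_le_0_iff)

lemma ereal_le_divide_SUP:
  fixes e :: ereal and c :: real and r :: "'i \<Rightarrow> ereal"
  assumes "0 < c" "0 < (SUP i\<in>I. r i)" "\<And>i. i \<in> I \<Longrightarrow> 0 < r i \<Longrightarrow> e \<le> ereal c / r i"
  shows "e \<le> ereal c / (SUP i\<in>I. r i)"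
proof (cases "e \<le> 0")
  case True
  then show ?thesis
    using assms(1,2) by (simp add: order_trans[OF True])
next
  case False
  obtain i0 where "i0 \<in> I" "0 < r i0"
    using assms(2) by (auto simp: less_SUP_iff)
  then have "e \<noteq> \<infinity>"
    using assms(3)[of i0] by (cases "r i0") auto
  then obtain \<epsilon> where \<epsilon>: "e = ereal \<epsilon>" "0 < \<epsilon>"
    using False by (cases e) auto
  have "r i \<le> ereal (c / \<epsilon>)" if "i \<in> I" for i
  proof (cases "0 < r i")
    case True
    then show ?thesis
      using assms(1) assms(3)[OF that True] \<epsilon> by (cases "r i") (auto simp: field_simps)
  next
    case False
    then have "r i \<le> 0"
      by simp
    also have "\<dots> \<le> ereal (c / \<epsilon>)"
      using assms(1) \<epsilon> by simp
    finally show ?thesis .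
  qed
  then have "(SUP i\<in>I. r i) \<le> ereal (c / \<epsilon>)"
    by (rule SUP_least)
  then show ?thesis
    using assms(1,2) \<epsilon> by (cases "SUP i\<in>I. r i") (auto simp: field_simps)
qed

lemma eps_X_le_divide_cover_ratio:
  fixes \<U> :: "'a::metric_space set set"
  assumes "\<not> bounded (UNIV :: 'a set)" "\<And>x::'a. finite (cball x S)" "1 \<le> p"
    and "is_cover \<U>" "mesh \<U> \<le> ereal S" "0 < cover_ratio p \<U>"
  shows "eps_X TYPE('a) p S \<le> ereal (2 powr (1 + 1 / p)) / cover_ratio p \<U>"
proof -
  have mult: "mult \<U> \<noteq> \<infinity>"
    using assms(6) by (auto simp: cover_ratio_def)
  have "0 < leb \<U>"
  proof (rule ccontr)
    assume "\<not> 0 < leb \<U>"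
    then have "cover_ratio p \<U> \<le> 0"
      using mult by (simp add: cover_ratio_def ereal_divide_nonpos_nonneg)
    then show False
      using assms(6) by simp
  qed
  then interpret cover_embedding \<U> p S
    using assms mult by unfold_locales
  have "2 * (2 * multiplicity) powr (1 / p) = 2 powr (1 + 1 / p) * multiplicity powr (1 / p)"
    using multiplicity_ge_1 by (simp add: powr_mult powr_add)
  also have "\<dots> \<le> 2 powr (1 + 1 / p) * multiplicity powr (2 / p)"
    using multiplicity_ge_1 p_pos by (intro mult_left_mono powr_mono) (auto simp: divide_right_mono)
  finally have "2 * (2 * multiplicity) powr (1 / p) / lebesgue
      \<le> 2 powr (1 + 1 / p) / (lebesgue / multiplicity powr (2 / p))"
    using lebesgue_pos by (simp add: divide_right_mono)
  then show ?thesis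
    using eps_X_le lebesgue_pos multiplicity_ge_1 by (simp add: cover_ratio_eq order_trans)
qed

theorem corollary3p2p2:
  fixes p S :: real
  assumes "\<not> bounded (UNIV :: 'a::metric_space set)"
    and "bounded_geometry TYPE('a)"
    and "finite_asdim TYPE('a)"
    and "1 \<le> p"
    and "S > 0"
    and "delta_p TYPE('a) p S > 0"
  shows "eps_X TYPE('a) p S \<le> ereal (2 powr (1 + 1 / p)) / delta_p TYPE('a) p S
       \<and> ereal (2 powr (1 + 1 / p)) / delta_p TYPE('a) p S \<le> 4 / delta_p TYPE('a) p S"
proof
  have finite_cball: "finite (cball x S)" for x :: 'a
    using assms(2) unfolding bounded_geometry_def by metis
  show "eps_X TYPE('a) p S \<le> ereal (2 powr (1 + 1 / p)) / delta_p TYPE('a) p S"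
    unfolding delta_p_def
    by (rule ereal_le_divide_SUP)
      (use assms(6) eps_X_le_divide_cover_ratio[OF assms(1) finite_cball assms(4)]
        in \<open>auto simp: delta_p_def\<close>)
  have "2 powr (1 + 1 / p) \<le> 2 powr 2"
    using assms(4) by (intro powr_mono) (auto simp: field_simps)
  then show "ereal (2 powr (1 + 1 / p)) / delta_p TYPE('a) p S \<le> 4 / delta_p TYPE('a) p S"
    using assms(6) by (intro ereal_divide_right_mono) auto
qed

end
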